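(* Let $f_0\in\mathbb{R}$, $g\in\mathbb{R}^n$, $H$ a symmetric $n\times n$ matrix, $\sigma>0$, and $m(s)=f_0+\langle g,s\rangle+\frac12\langle Hs,s\rangle+\frac16\sigma\|s\|^3$. Suppose $s\in\mathbb{R}^n$ and $\beta\ge0$ satisfy $m(0)-m(s)\ge\beta$. Then $$\|s\|\le\frac{\frac12\|H\|_{r,2}+\sqrt{\|H\|_{r,2}^2+\frac23\sigma\|g\|_{r,1}}}{\frac13\sigma}.$$ Moreover, if $\beta>0$, then: if $\lambda_r[H]<0$, $$\|s\|\ge\frac{\sqrt{\|g\|_{r,1}^2+2\beta|\lambda_r[H]|}-\|g\|_{r,1}}{|\lambda_r[H]|};$$ and if $\lambda_r[H]\ge0$, then $g\neq0$ and $\|s\|\ge\beta/\|g\|_{r,1}$.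
   Context: $\|\cdot\|$ is an arbitrary (possibly non-smooth) norm on $\mathbb{R}^n$, $\langle\cdot,\cdot\rangle$ the Euclidean inner product, $\|v\|_{r,1}=\max_{\|s\|=1}|\langle v,s\rangle|$ the dual norm, and for a symmetric matrix $H$, $\|H\|_{r,2}=\max_{\|v\|=1}|\langle Hv,v\rangle|$ and $\lambda_r[H]=\min_{\|v\|=1}\langle Hv,v\rangle$. *)

theory Defs
  imports "HOL-Analysis.Analysis"
begin

definition is_norm :: "(real^'n \<Rightarrow> real) \<Rightarrow> bool" where
  "is_norm N \<longleftrightarrow> (\<forall>x. N x = 0 \<longleftrightarrow> x = 0) \<and> (\<forall>c x. N (c *\<^sub>R x) = \<bar>c\<bar> * N x)
     \<and> (\<forall>x y. N (x + y) \<le> N x + N y)"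

definition dual_norm :: "(real^'n \<Rightarrow> real) \<Rightarrow> real^'n \<Rightarrow> real" where
  "dual_norm N v = Sup {\<bar>v \<bullet> s\<bar> | s. N s = 1}"

definition rnorm2 :: "(real^'n \<Rightarrow> real) \<Rightarrow> real^'n^'n \<Rightarrow> real" where
  "rnorm2 N H = Sup {\<bar>(H *v v) \<bullet> v\<bar> | v. N v = 1}"

definition lambda_r :: "(real^'n \<Rightarrow> real) \<Rightarrow> real^'n^'n \<Rightarrow> real" where
  "lambda_r N H = Inf {(H *v v) \<bullet> v | v. N v = 1}"

definition cubic_model :: "(real^'n \<Rightarrow> real) \<Rightarrow> real \<Rightarrow> real^'n \<Rightarrow> real^'n^'n \<Rightarrow> real \<Rightarrow> real^'n \<Rightarrow> real" where
  "cubic_model N f0 g H \<sigma> s = f0 + g \<bullet> s + (1/2) * ((H *v s) \<bullet> s) + (1/6) * \<sigma> * (N s) ^ 3"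

end

theory Submission
  imports Defs
begin

text \<open>The decrease \<open>m(0) - m(s) = -\<langle>g,s\<rangle> - \<langle>Hs,s\<rangle>/2 - \<sigma>\<parallel>s\<parallel>\<^sup>3/6\<close> is
  controlled by homogeneity: \<open>\<bar>\<langle>g,s\<rangle>\<bar> \<le> \<parallel>g\<parallel>\<^sub>r\<^sub>,\<^sub>1 \<parallel>s\<parallel>\<close>,
  \<open>\<bar>\<langle>Hs,s\<rangle>\<bar> \<le> \<parallel>H\<parallel>\<^sub>r\<^sub>,\<^sub>2 \<parallel>s\<parallel>\<^sup>2\<close> and \<open>\<langle>Hs,s\<rangle> \<ge> \<lambda>\<^sub>r[H] \<parallel>s\<parallel>\<^sup>2\<close>; these
  extrema over the unit sphere are finite because all norms on \<open>\<real>\<^sup>n\<close> are equivalent,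
  so that sphere is compact. With \<open>r = \<parallel>s\<parallel>\<close>, the upper bound is the positive root of
  the cubic inequality \<open>\<sigma>r\<^sup>3/6 \<le> \<parallel>g\<parallel> r + \<parallel>H\<parallel> r\<^sup>2/2\<close>, and the lower bounds come from
  \<open>\<beta> \<le> \<parallel>g\<parallel> r + \<bar>\<lambda>\<^sub>r[H]\<bar> r\<^sup>2/2\<close> if \<open>\<lambda>\<^sub>r[H] < 0\<close> and from \<open>\<beta> \<le> \<parallel>g\<parallel> r\<close> otherwise.\<close>

lemma is_norm_zero: "is_norm N \<Longrightarrow> N 0 = 0"
  by (simp add: is_norm_def)

lemma is_norm_scaleR: "is_norm N \<Longrightarrow> N (c *\<^sub>R x) = \<bar>c\<bar> * N x"
  by (simp add: is_norm_def)

lemma is_norm_triangle: "is_norm N \<Longrightarrow> N (x + y) \<le> N x + N y"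
  by (simp add: is_norm_def)

lemma is_norm_minus_commute: "is_norm N \<Longrightarrow> N (x - y) = N (y - x)"
  using is_norm_scaleR[of N "-1" "x - y"] by simp

lemma is_norm_nonneg:
  assumes "is_norm N"
  shows "0 \<le> N x"
  using is_norm_triangle[OF assms, of x "-x"] is_norm_minus_commute[OF assms, of 0 x]
    is_norm_zero[OF assms] by simp

lemma is_norm_pos: "is_norm N \<Longrightarrow> x \<noteq> 0 \<Longrightarrow> 0 < N x"
  using is_norm_nonneg[of N x] by (auto simp: is_norm_def less_le)

lemma is_norm_sum:
  assumes "is_norm N"
  shows "N (sum f A) \<le> (\<Sum>i\<in>A. N (f i))"
proof (induction A rule: infinite_finite_induct)
  case (insert x F)
  then show ?case using is_norm_triangle[OF assms, of "f x" "sum f F"] by simp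
qed (simp_all add: is_norm_zero[OF assms])

lemma is_norm_le_euclidean:
  fixes N :: "real^'n \<Rightarrow> real"
  assumes "is_norm N"
  obtains C where "0 \<le> C" "\<And>x :: real^'n. N x \<le> C * norm x"
proof
  define C where "C = (\<Sum>i\<in>UNIV. N (axis i (1::real) :: real^'n))"
  show "0 \<le> C"
    unfolding C_def by (intro sum_nonneg is_norm_nonneg[OF assms])
  fix x :: "real^'n"
  have "N x = N (\<Sum>i\<in>UNIV. (x$i) *\<^sub>R axis i 1)"
    using basis_expansion[of x] by (simp add: scalar_mult_eq_scaleR)
  also have "\<dots> \<le> (\<Sum>i\<in>UNIV. N ((x$i) *\<^sub>R axis i 1))"
    by (rule is_norm_sum[OF assms])
  also have "\<dots> = (\<Sum>i\<in>UNIV. \<bar>x$i\<bar> * N (axis i 1))"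
    by (simp add: is_norm_scaleR[OF assms])
  also have "\<dots> \<le> (\<Sum>i\<in>UNIV. norm x * N (axis i 1))"
    by (intro sum_mono mult_right_mono component_le_norm_cart is_norm_nonneg[OF assms])
  also have "\<dots> = C * norm x"
    by (simp add: C_def sum_distrib_left mult.commute)
  finally show "N x \<le> C * norm x" .
qed

lemma is_norm_reverse_triangle:
  assumes "is_norm N"
  shows "\<bar>N x - N y\<bar> \<le> N (x - y)"
  using is_norm_triangle[OF assms, of "x - y" y] is_norm_triangle[OF assms, of "y - x" x]
    is_norm_minus_commute[OF assms, of x y] by simp

lemma is_norm_continuous:
  fixes N :: "real^'n \<Rightarrow> real"
  assumes "is_norm N"
  shows "continuous_on UNIV N"
proof -
  obtain C where "0 \<le> C" and C: "\<And>x :: real^'n. N x \<le> C * norm x"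
    using is_norm_le_euclidean[OF assms] by blast
  have "dist (N x) (N y) \<le> C * dist x y" for x y
    using is_norm_reverse_triangle[OF assms, of x y] C[of "x - y"]
    by (simp add: dist_real_def dist_norm)
  then show ?thesis
    using \<open>0 \<le> C\<close> by (intro lipschitz_on_continuous_on lipschitz_onI)
qed

text \<open>The minimum of \<open>N\<close> on the Euclidean unit sphere is the equivalence constant.\<close>
lemma is_norm_ge_euclidean:
  fixes N :: "real^'n \<Rightarrow> real"
  assumes "is_norm N"
  obtains m where "0 < m" "\<And>x :: real^'n. m * norm x \<le> N x"
proof -
  obtain x0 :: "real^'n" where x0: "x0 \<in> sphere 0 1" "\<And>y. y \<in> sphere 0 1 \<Longrightarrow> N x0 \<le> N y"
    using continuous_attains_inf[OF compact_sphere _ continuous_on_subset[OF is_norm_continuous[OF assms]],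
        of 0 1]
    by auto
  have "N x0 * norm x \<le> N x" for x :: "real^'n"
  proof (cases "x = 0")
    case False
    then have "N x0 \<le> N ((1 / norm x) *\<^sub>R x)"
      by (intro x0(2)) simp
    then show ?thesis
      using False by (simp add: is_norm_scaleR[OF assms] field_simps)
  qed (simp add: is_norm_zero[OF assms])
  moreover have "0 < N x0"
    using x0(1) by (intro is_norm_pos[OF assms]) auto
  ultimately show ?thesis using that by blast
qed

definition norm_sphere :: "(real^'n \<Rightarrow> real) \<Rightarrow> (real^'n) set" where
  "norm_sphere N = {v. N v = 1}"

lemma compact_norm_sphere:
  fixes N :: "real^'n \<Rightarrow> real"
  assumes "is_norm N"
  shows "compact (norm_sphere N)"
  unfolding compact_eq_bounded_closed
proof
  obtain m where "0 < m" and m: "\<And>x :: real^'n. m * norm x \<le> N x"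
    using is_norm_ge_euclidean[OF assms] by blast
  have "norm_sphere N \<subseteq> cball 0 (1 / m)"
  proof
    fix x assume "x \<in> norm_sphere N"
    then have "m * norm x \<le> 1"
      using m[of x] by (simp add: norm_sphere_def)
    then show "x \<in> cball 0 (1 / m)"
      using \<open>0 < m\<close> by (simp add: field_simps)
  qed
  then show "bounded (norm_sphere N)"
    using bounded_cball bounded_subset by blast
  show "closed (norm_sphere N)"
    unfolding norm_sphere_def
    by (intro closed_Collect_eq is_norm_continuous[OF assms] continuous_on_const)
qed

lemma normalize_in_norm_sphere:
  "is_norm N \<Longrightarrow> x \<noteq> 0 \<Longrightarrow> (1 / N x) *\<^sub>R x \<in> norm_sphere N"
  using is_norm_pos[of N x] by (simp add: norm_sphere_def is_norm_scaleR)

lemma norm_sphere_nonempty: "is_norm N \<Longrightarrow> norm_sphere N \<noteq> {}"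
  using normalize_in_norm_sphere[of N "axis undefined 1"] by (auto simp: axis_eq_0_iff)

lemma bounded_image_norm_sphere:
  "is_norm N \<Longrightarrow> continuous_on UNIV f \<Longrightarrow> bounded (f ` norm_sphere N)"
  by (meson compact_continuous_image compact_imp_bounded compact_norm_sphere
      continuous_on_subset subset_UNIV)

lemma homogeneous_zero:
  fixes f :: "'a::real_vector \<Rightarrow> real"
  assumes "\<And>c u. 0 < c \<Longrightarrow> f (c *\<^sub>R u) = c ^ k * f u" "0 < k"
  shows "f 0 = 0"
proof -
  have "f 0 = 2 ^ k * f 0"
    using assms(1)[of 2 0] by simp
  moreover have "1 < (2::real) ^ k"
    using \<open>0 < k\<close> by (intro one_less_power) simp_all
  ultimately show ?thesis by (metis mult_cancel_right1 order_less_irrefl)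
qed

lemma homogeneous_on_norm_sphere:
  assumes "is_norm N" "s \<noteq> 0" "\<And>c u. 0 < c \<Longrightarrow> f (c *\<^sub>R u) = c ^ k * f u"
  obtains u where "u \<in> norm_sphere N" "f s = N s ^ k * f u"
proof
  show "(1 / N s) *\<^sub>R s \<in> norm_sphere N"
    using assms(1,2) by (rule normalize_in_norm_sphere)
  have "s = N s *\<^sub>R ((1 / N s) *\<^sub>R s)"
    using is_norm_pos[OF assms(1,2)] by simp
  then show "f s = N s ^ k * f ((1 / N s) *\<^sub>R s)"
    using assms(3) is_norm_pos[OF assms(1,2)] by metis
qed

lemma homogeneous_le_Sup_norm_sphere:
  fixes f :: "real^'n \<Rightarrow> real"
  assumes "is_norm N" "continuous_on UNIV f"
    and "\<And>c u. 0 < c \<Longrightarrow> f (c *\<^sub>R u) = c ^ k * f u" "0 < k"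
  shows "f s \<le> Sup (f ` norm_sphere N) * N s ^ k"
proof (cases "s = 0")
  case True
  then show ?thesis
    using homogeneous_zero[OF assms(3,4)] \<open>0 < k\<close> by (simp add: is_norm_zero[OF assms(1)] power_0_left)
next
  case False
  then obtain u where u: "u \<in> norm_sphere N" "f s = N s ^ k * f u"
    using homogeneous_on_norm_sphere[OF assms(1) _ assms(3)] by blast
  have "f u \<le> Sup (f ` norm_sphere N)"
    using u(1) bounded_image_norm_sphere[OF assms(1,2)] by (intro cSup_upper bounded_imp_bdd_above) auto
  then have "N s ^ k * f u \<le> N s ^ k * Sup (f ` norm_sphere N)"
    by (simp add: mult_left_mono is_norm_nonneg[OF assms(1)])
  then show ?thesis
    using u(2) by (simp add: mult.commute)
qed

lemma Inf_norm_sphere_le_homogeneous: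
  fixes f :: "real^'n \<Rightarrow> real"
  assumes "is_norm N" "continuous_on UNIV f"
    and "\<And>c u. 0 < c \<Longrightarrow> f (c *\<^sub>R u) = c ^ k * f u" "0 < k"
  shows "Inf (f ` norm_sphere N) * N s ^ k \<le> f s"
proof (cases "s = 0")
  case True
  then show ?thesis
    using homogeneous_zero[OF assms(3,4)] \<open>0 < k\<close> by (simp add: is_norm_zero[OF assms(1)] power_0_left)
next
  case False
  then obtain u where u: "u \<in> norm_sphere N" "f s = N s ^ k * f u"
    using homogeneous_on_norm_sphere[OF assms(1) _ assms(3)] by blast
  have "Inf (f ` norm_sphere N) \<le> f u"
    using u(1) bounded_image_norm_sphere[OF assms(1,2)] by (intro cInf_lower bounded_imp_bdd_below) auto
  then have "N s ^ k * Inf (f ` norm_sphere N) \<le> N s ^ k * f u"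
    by (simp add: mult_left_mono is_norm_nonneg[OF assms(1)])
  then show ?thesis
    using u(2) by (simp add: mult.commute)
qed

lemma Sup_norm_sphere_nonneg:
  fixes f :: "real^'n \<Rightarrow> real"
  assumes "is_norm N" "continuous_on UNIV f" "\<And>v. 0 \<le> f v"
  shows "0 \<le> Sup (f ` norm_sphere N)"
proof -
  obtain u where "u \<in> norm_sphere N"
    using norm_sphere_nonempty[OF assms(1)] by blast
  then show ?thesis
    using assms(3)[of u] bounded_image_norm_sphere[OF assms(1,2)]
    by (intro cSup_upper2 bounded_imp_bdd_above) auto
qed

lemma image_norm_sphere: "{f v | v. N v = 1} = f ` norm_sphere N"
  by (auto simp: norm_sphere_def)

lemma quadratic_form_scaleR:
  fixes H :: "real^'n^'n"
  shows "(H *v (c *\<^sub>R u)) \<bullet> (c *\<^sub>R u) = c ^ 2 * ((H *v u) \<bullet> u)"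
  by (simp add: matrix_vector_mult_scaleR power2_eq_square)

lemma inner_le_dual_norm:
  assumes "is_norm N"
  shows "\<bar>g \<bullet> s\<bar> \<le> dual_norm N g * N s"
proof -
  have "continuous_on UNIV (\<lambda>v. \<bar>g \<bullet> v\<bar>)"
    by (intro continuous_intros)
  from homogeneous_le_Sup_norm_sphere[OF assms this, of 1 s] show ?thesis
    by (simp add: dual_norm_def image_norm_sphere abs_mult)
qed

lemma dual_norm_nonneg:
  assumes "is_norm N"
  shows "0 \<le> dual_norm N g"
proof -
  have "continuous_on UNIV (\<lambda>v. \<bar>g \<bullet> v\<bar>)"
    by (intro continuous_intros)
  from Sup_norm_sphere_nonneg[OF assms this] show ?thesis
    by (simp add: dual_norm_def image_norm_sphere)
qed

lemma quadratic_form_le_rnorm2: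
  assumes "is_norm N"
  shows "\<bar>(H *v s) \<bullet> s\<bar> \<le> rnorm2 N H * N s ^ 2"
proof -
  have "continuous_on UNIV (\<lambda>v. \<bar>(H *v v) \<bullet> v\<bar>)"
    by (intro continuous_intros)
  from homogeneous_le_Sup_norm_sphere[OF assms this, of 2 s] show ?thesis
    by (simp add: rnorm2_def image_norm_sphere quadratic_form_scaleR abs_mult del: inner_scaleR_right)
qed

lemma lambda_r_le_quadratic_form:
  assumes "is_norm N"
  shows "lambda_r N H * N s ^ 2 \<le> (H *v s) \<bullet> s"
proof -
  have "continuous_on UNIV (\<lambda>v. (H *v v) \<bullet> v)"
    by (intro continuous_intros)
  from Inf_norm_sphere_le_homogeneous[OF assms this, of 2 s] show ?thesis
    by (simp add: lambda_r_def image_norm_sphere quadratic_form_scaleR del: inner_scaleR_right)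
qed

lemma cubic_model_decrease:
  "is_norm N \<Longrightarrow> cubic_model N f0 g H \<sigma> 0 - cubic_model N f0 g H \<sigma> s
     = - (g \<bullet> s) - ((H *v s) \<bullet> s) / 2 - \<sigma> / 6 * N s ^ 3"
  by (simp add: cubic_model_def is_norm_zero)

lemma cubic_model_decrease_le_rnorm2:
  assumes "is_norm N"
  shows "cubic_model N f0 g H \<sigma> 0 - cubic_model N f0 g H \<sigma> s
     \<le> dual_norm N g * N s + rnorm2 N H / 2 * N s ^ 2 - \<sigma> / 6 * N s ^ 3"
  using cubic_model_decrease[OF assms, of f0 g H \<sigma> s] inner_le_dual_norm[OF assms, of g s]
    quadratic_form_le_rnorm2[OF assms, of H s] by linarith

lemma cubic_model_decrease_le_lambda_r:
  assumes "is_norm N" "0 \<le> \<sigma>"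
  shows "cubic_model N f0 g H \<sigma> 0 - cubic_model N f0 g H \<sigma> s
     \<le> dual_norm N g * N s - lambda_r N H / 2 * N s ^ 2"
proof -
  have "0 \<le> \<sigma> / 6 * N s ^ 3"
    using assms(2) is_norm_nonneg[OF assms(1), of s] by simp
  then show ?thesis
    using cubic_model_decrease[OF assms(1), of f0 g H \<sigma> s] inner_le_dual_norm[OF assms(1), of g s]
      lambda_r_le_quadratic_form[OF assms(1), of H s] by linarith
qed

lemma dual_norm_zero: "is_norm N \<Longrightarrow> dual_norm N 0 = 0"
  unfolding dual_norm_def image_norm_sphere using norm_sphere_nonempty[of N] by simp

lemma cubic_inequality_root_bound:
  fixes \<sigma> r d R :: real
  assumes "0 < \<sigma>" "0 \<le> r" "0 \<le> d" "\<sigma> / 6 * r ^ 3 \<le> d * r + R / 2 * r ^ 2"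
  shows "r \<le> ((1/2) * R + sqrt (R ^ 2 + (2/3) * \<sigma> * d)) / ((1/3) * \<sigma>)"
proof -
  have reduced: "\<sigma> / 6 * r ^ 2 \<le> d + R / 2 * r"
  proof (cases "r = 0")
    case False
    then have "r * (\<sigma> / 6 * r ^ 2) \<le> r * (d + R / 2 * r)"
      using assms(4) by (simp add: algebra_simps power2_eq_square power3_eq_cube)
    then show ?thesis
      using False assms(2) by simp
  qed (simp add: assms(3))
  have "2 * \<sigma> / 3 * (\<sigma> / 6 * r ^ 2) \<le> 2 * \<sigma> / 3 * (d + R / 2 * r)"
    using reduced assms(1) by (intro mult_left_mono) simp_all
  then have "(\<sigma> / 3 * r - R / 2) ^ 2 + 3 / 4 * R ^ 2 \<le> R ^ 2 + (2/3) * \<sigma> * d"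
    by (simp add: power2_eq_square algebra_simps)
  then have "(\<sigma> / 3 * r - R / 2) ^ 2 \<le> R ^ 2 + (2/3) * \<sigma> * d"
    using zero_le_power2[of R] by linarith
  then have "\<sigma> / 3 * r - R / 2 \<le> sqrt (R ^ 2 + (2/3) * \<sigma> * d)"
    by (rule real_le_rsqrt)
  then show ?thesis
    using assms(1) by (simp add: field_simps)
qed

lemma quadratic_inequality_root_bound:
  fixes L r d \<beta> :: real
  assumes "0 < L" "0 \<le> r" "0 \<le> d" "\<beta> \<le> d * r + L / 2 * r ^ 2"
  shows "(sqrt (d ^ 2 + 2 * \<beta> * L) - d) / L \<le> r"
proof -
  have "L * \<beta> \<le> L * (d * r + L / 2 * r ^ 2)"
    using assms by simp
  then have "d ^ 2 + 2 * \<beta> * L \<le> (L * r + d) ^ 2"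
    by (simp add: power2_eq_square algebra_simps)
  then have "sqrt (d ^ 2 + 2 * \<beta> * L) \<le> L * r + d"
    using assms by (intro real_le_lsqrt) simp_all
  then show ?thesis
    using assms(1) by (simp add: field_simps)
qed

theorem lemma5p4:
  fixes N :: "real^'n \<Rightarrow> real" and f0 :: real and g s :: "real^'n"
    and H :: "real^'n^'n" and \<sigma> \<beta> :: real
  assumes "is_norm N"
    and "transpose H = H"
    and "\<sigma> > 0"
    and "\<beta> \<ge> 0"
    and "cubic_model N f0 g H \<sigma> 0 - cubic_model N f0 g H \<sigma> s \<ge> \<beta>"
  shows "N s \<le> ((1/2) * rnorm2 N H + sqrt ((rnorm2 N H)^2 + (2/3) * \<sigma> * dual_norm N g))
                 / ((1/3) * \<sigma>)
     \<and> (\<beta> > 0 \<longrightarrow>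
          (lambda_r N H < 0 \<longrightarrow>
             N s \<ge> (sqrt ((dual_norm N g)^2 + 2 * \<beta> * \<bar>lambda_r N H\<bar>) - dual_norm N g)
                    / \<bar>lambda_r N H\<bar>)
        \<and> (lambda_r N H \<ge> 0 \<longrightarrow> g \<noteq> 0 \<and> N s \<ge> \<beta> / dual_norm N g))"
proof -
  have r: "0 \<le> N s" and d: "0 \<le> dual_norm N g"
    using assms(1) by (rule is_norm_nonneg, rule dual_norm_nonneg)
  have "\<sigma> / 6 * N s ^ 3 \<le> dual_norm N g * N s + rnorm2 N H / 2 * N s ^ 2"
    using cubic_model_decrease_le_rnorm2[OF assms(1), of f0 g H \<sigma> s] assms(4,5) by linarith
  then have upper: "N s \<le> ((1/2) * rnorm2 N H + sqrt ((rnorm2 N H)^2 + (2/3) * \<sigma> * dual_norm N g))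
                 / ((1/3) * \<sigma>)"
    by (rule cubic_inequality_root_bound[OF assms(3) r d])
  have decrease: "\<beta> \<le> dual_norm N g * N s - lambda_r N H / 2 * N s ^ 2"
    using cubic_model_decrease_le_lambda_r[OF assms(1), of \<sigma> f0 g H s] assms(3,5) by linarith
  have lower_negative: "(sqrt ((dual_norm N g)^2 + 2 * \<beta> * \<bar>lambda_r N H\<bar>) - dual_norm N g)
      / \<bar>lambda_r N H\<bar> \<le> N s" if "lambda_r N H < 0"
    using quadratic_inequality_root_bound[OF _ r d, of "\<bar>lambda_r N H\<bar>" \<beta>] decrease that by simp
  have lower_nonneg: "g \<noteq> 0 \<and> \<beta> / dual_norm N g \<le> N s" if "0 < \<beta>" "0 \<le> lambda_r N H"
  proof -
    have "\<beta> \<le> dual_norm N g * N s"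
      using decrease mult_nonneg_nonneg[OF that(2) zero_le_power2[of "N s"]] by linarith
    then have "0 < dual_norm N g"
      using that(1) d by (cases "dual_norm N g = 0") auto
    then show ?thesis
      using \<open>\<beta> \<le> dual_norm N g * N s\<close> dual_norm_zero[OF assms(1)]
      by (auto simp: divide_le_eq mult.commute)
  qed
  show ?thesis
    using upper lower_negative lower_nonneg by blast
qed

end
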